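(* Let $n\geq 2$, $F$ a field of characteristic $0$, and let $R=M_n(F)$ carry the elementary $\mathbb{Z}_{n+1}$-grading induced by $(\overline 0,\overline 1,\dots,\overline{n-1})$. Then the monomial $x_1x_2\cdots x_n$ with $\deg x_i=\overline 1$ for all $i$ is a graded identity of $R$, while $R$ satisfies no graded monomial identity of length less than $n$. In particular, this monomial identity of length $n$ does not follow from graded monomial identities of smaller length, so the bound $n$ in the statement "every graded monomial identity of an elementary grading on $M_n(F)$ follows from those of length at most $n$" cannot be improved.
   Context: The elementary $G$-grading on $M_n(F)$ induced by $(g_1,\dots,g_n)\in G^n$ (here $G=\mathbb{Z}_{n+1}$, written additively) is $R_g=\mathrm{span}\{e_{pq}: g_q-g_p=g\}$. A graded monomial $x_1\cdots x_k$ (variables with prescribed degrees in $G$) is a graded identity if it vanishes whenever each $x_i$ is replaced by an element of $R_{\deg x_i}$; its length is $k$. *)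

theory Defs
  imports "Jordan_Normal_Form.Matrix"
begin

text \<open>Elementary grading on M_n(F) by the cyclic group Z_m (written as integers
  modulo m), induced by the tuple gs 0, ..., gs (n-1) (indices are 0-based).\<close>

definition elem_component ::
  "'a::field itself \<Rightarrow> nat \<Rightarrow> (nat \<Rightarrow> int) \<Rightarrow> nat \<Rightarrow> int \<Rightarrow> 'a mat set" where
  "elem_component _ m gs n d =
     {A \<in> carrier_mat n n. \<forall>p<n. \<forall>q<n.
        A $$ (p, q) \<noteq> 0 \<longrightarrow> (gs q - gs p) mod int m = d mod int m}"

text \<open>A graded monomial x_1 ... x_k, with deg x_i = ds ! i (in Z_m), is a graded
  identity if every substitution of homogeneous elements of the prescribed
  degrees gives the zero matrix.\<close>

definition graded_monomial_identity ::
  "'a::field itself \<Rightarrow> nat \<Rightarrow> (nat \<Rightarrow> int) \<Rightarrow> nat \<Rightarrow> int list \<Rightarrow> bool" where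
  "graded_monomial_identity T m gs n ds \<longleftrightarrow>
     (\<forall>As :: 'a mat list. length As = length ds \<longrightarrow>
        (\<forall>i<length ds. As ! i \<in> elem_component T m gs n (ds ! i)) \<longrightarrow>
        foldr (\<lambda>A B. A * B) As (1\<^sub>m n) = 0\<^sub>m n n)"

end

theory Submission
  imports Defs
begin

text \<open>In degree 1 the condition q - p = 1 in Z_(n+1) with p, q < n forces q = p + 1, so every
  homogeneous element of degree 1 lives on the first superdiagonal, and a product of n of them
  lives on the n-th superdiagonal, which is empty. Conversely, for degrees d_1, ..., d_k with
  k < n, the k + 1 partial sums s, s + d_1, ..., s + d_1 + ... + d_k in Z_(n+1) avoid the residue n
  (the only residue that is not an index) for some of the n + 1 choices of s, since each partial sum
  rules out a single s. Reading these residues as indices P_0, ..., P_k, the product of the matrix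
  units e_(P_0 P_1), ..., e_(P_(k-1) P_k), which are homogeneous of degrees d_1, ..., d_k, is
  e_(P_0 P_k) \<noteq> 0.\<close>

definition shift_supported :: "nat \<Rightarrow> nat \<Rightarrow> 'a::semiring_0 mat \<Rightarrow> bool" where
  "shift_supported n k A \<longleftrightarrow>
     A \<in> carrier_mat n n \<and> (\<forall>p<n. \<forall>q<n. A $$ (p, q) \<noteq> 0 \<longrightarrow> q = p + k)"

lemma shift_supported_one_mat: "shift_supported n 0 (1\<^sub>m n :: 'a::semiring_1 mat)"
  by (simp add: shift_supported_def)

lemma shift_supported_mult:
  assumes A: "shift_supported n a A" and B: "shift_supported n b B"
  shows "shift_supported n (a + b) (A * B)"
proof -
  have carrier: "A \<in> carrier_mat n n" "B \<in> carrier_mat n n"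
    using A B by (simp_all add: shift_supported_def)
  have "q = p + (a + b)" if pq: "p < n" "q < n" "(A * B) $$ (p, q) \<noteq> 0" for p q
  proof -
    have "(\<Sum>r\<in>{0..<n}. A $$ (p, r) * B $$ (r, q)) \<noteq> 0"
      using pq carrier by (simp add: scalar_prod_def)
    then obtain r where r: "r < n" "A $$ (p, r) * B $$ (r, q) \<noteq> 0"
      by (auto elim: sum.not_neutral_contains_not_neutral)
    then have "A $$ (p, r) \<noteq> 0" "B $$ (r, q) \<noteq> 0"
      by auto
    with A B pq r(1) show ?thesis
      unfolding shift_supported_def by (metis add.assoc)
  qed
  with carrier show ?thesis
    by (simp add: shift_supported_def)
qed

lemma shift_supported_foldr_mult:
  fixes As :: "'a::semiring_1 mat list"
  assumes "\<forall>A\<in>set As. shift_supported n k A"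
  shows "shift_supported n (length As * k) (foldr (*) As (1\<^sub>m n))"
  using assms
proof (induction As)
  case Nil
  show ?case by (simp add: shift_supported_one_mat)
next
  case (Cons A As)
  then have "shift_supported n (k + length As * k) (A * foldr (*) As (1\<^sub>m n))"
    by (intro shift_supported_mult) simp_all
  then show ?case by simp
qed

lemma shift_supported_eq_zero:
  assumes "shift_supported n k A" "n \<le> k"
  shows "A = 0\<^sub>m n n"
proof (rule eq_matI)
  fix p q assume "p < dim_row (0\<^sub>m n n :: 'a mat)" "q < dim_col (0\<^sub>m n n :: 'a mat)"
  with assms show "A $$ (p, q) = 0\<^sub>m n n $$ (p, q)"
    unfolding shift_supported_def by fastforce
qed (use assms in \<open>auto simp: shift_supported_def\<close>)

lemma diff_mod_eq_one_imp_Suc: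
  fixes p q n m :: nat
  assumes "p < n" "q < n" "n < m" "(int q - int p) mod int m = 1 mod int m"
  shows "q = Suc p"
proof (rule ccontr)
  assume "q \<noteq> Suc p"
  moreover have "int m dvd int q - int p - 1"
    using assms(4) by (simp add: mod_eq_dvd_iff)
  ultimately have "\<bar>int m\<bar> \<le> \<bar>int q - int p - 1\<bar>"
    by (intro dvd_imp_le_int) auto
  with assms(1-3) show False by linarith
qed

lemma elem_component_one_shift_supported:
  assumes "n < m" "A \<in> elem_component TYPE('a::field) m int n 1"
  shows "shift_supported n 1 A"
proof -
  have "A \<in> carrier_mat n n"
    and "\<forall>p<n. \<forall>q<n. A $$ (p, q) \<noteq> 0 \<longrightarrow> (int q - int p) mod int m = 1 mod int m"
    using assms(2) by (simp_all add: elem_component_def)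
  with assms(1) show ?thesis
    unfolding shift_supported_def using diff_mod_eq_one_imp_Suc by simp
qed

lemma graded_monomial_identity_replicate_one:
  assumes "n < m"
  shows "graded_monomial_identity TYPE('a::field) m int n (replicate n 1)"
  unfolding graded_monomial_identity_def
proof (intro allI impI)
  fix As :: "'a mat list"
  assume len: "length As = length (replicate n (1::int))"
    and hom: "\<forall>i<length (replicate n 1). As ! i \<in> elem_component TYPE('a) m int n (replicate n 1 ! i)"
  have "shift_supported n 1 A" if "A \<in> set As" for A
  proof -
    from that len obtain i where "i < n" "A = As ! i"
      by (auto simp: in_set_conv_nth)
    with hom assms show ?thesis
      by (intro elem_component_one_shift_supported) auto
  qed
  then have "shift_supported n n (foldr (*) As (1\<^sub>m n))"
    using shift_supported_foldr_mult[of As n 1] len by simp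
  then show "foldr (*) As (1\<^sub>m n) = 0\<^sub>m n n"
    by (rule shift_supported_eq_zero) simp
qed

definition matrix_unit :: "nat \<Rightarrow> nat \<Rightarrow> nat \<Rightarrow> 'a::zero_neq_one mat" where
  "matrix_unit n p q = mat n n (\<lambda>(i, j). if i = p \<and> j = q then 1 else 0)"

lemma dim_matrix_unit [simp]:
  "dim_row (matrix_unit n p q) = n" "dim_col (matrix_unit n p q) = n"
  by (simp_all add: matrix_unit_def)

lemma index_matrix_unit [simp]:
  "i < n \<Longrightarrow> j < n \<Longrightarrow> matrix_unit n p q $$ (i, j) = (if i = p \<and> j = q then 1 else 0)"
  by (simp add: matrix_unit_def)

lemma matrix_unit_mult:
  assumes "q < n"
  shows "matrix_unit n p q * matrix_unit n q r = (matrix_unit n p r :: 'a::semiring_1 mat)"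
proof (rule eq_matI)
  fix i j assume "i < dim_row (matrix_unit n p r :: 'a mat)" "j < dim_col (matrix_unit n p r :: 'a mat)"
  then have ij: "i < n" "j < n" by simp_all
  then have "(matrix_unit n p q * matrix_unit n q r :: 'a mat) $$ (i, j)
      = (\<Sum>x\<in>{0..<n}. matrix_unit n p q $$ (i, x) * matrix_unit n q r $$ (x, j))"
    by (auto simp: scalar_prod_def intro!: sum.cong)
  also have "\<dots> = (\<Sum>x\<in>{0..<n}. if x = q then (if i = p \<and> j = r then 1 else 0) else 0)"
    using ij by (intro sum.cong) auto
  also have "\<dots> = matrix_unit n p r $$ (i, j)"
    using assms ij by simp
  finally show "(matrix_unit n p q * matrix_unit n q r) $$ (i, j) = (matrix_unit n p r :: 'a mat) $$ (i, j)" .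
qed simp_all

lemma matrix_unit_elem_component:
  assumes "(gs q - gs p) mod int m = d mod int m"
  shows "matrix_unit n p q \<in> elem_component TYPE('a::field) m gs n d"
  using assms by (auto simp: elem_component_def split: if_splits)

lemma foldr_mult_matrix_unit_path:
  assumes "a < b" "\<forall>j\<le>b. P j < n"
  shows "foldr (*) (map (\<lambda>j. matrix_unit n (P j) (P (Suc j))) [a..<b]) (1\<^sub>m n)
    = (matrix_unit n (P a) (P b) :: 'a::semiring_1 mat)"
  using assms
proof (induction "b - a" arbitrary: a)
  case 0
  then show ?case by simp
next
  case (Suc k)
  show ?case
  proof (cases "Suc a = b")
    case True
    then show ?thesis by (simp flip: True)
  next
    case False
    with Suc.prems have "[a..<b] = a # [Suc a..<b]" "P (Suc a) < n"
      by (auto simp: upt_conv_Cons)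
    with Suc False show ?thesis
      by (simp add: matrix_unit_mult)
  qed
qed

lemma not_graded_monomial_identity_if_path:
  assumes "ds \<noteq> []" "\<forall>j\<le>length ds. P j < n"
    and "\<forall>i<length ds. (gs (P (Suc i)) - gs (P i)) mod int m = ds ! i mod int m"
  shows "\<not> graded_monomial_identity TYPE('a::field) m gs n ds"
proof -
  define As where "As = map (\<lambda>j. matrix_unit n (P j) (P (Suc j)) :: 'a mat) [0..<length ds]"
  have "\<forall>i<length ds. As ! i \<in> elem_component TYPE('a) m gs n (ds ! i)"
    using assms(3) by (simp add: As_def matrix_unit_elem_component)
  moreover have "foldr (*) As (1\<^sub>m n) = matrix_unit n (P 0) (P (length ds))"
    using assms(1,2) unfolding As_def by (intro foldr_mult_matrix_unit_path) auto
  moreover have "matrix_unit n (P 0) (P (length ds)) \<noteq> (0\<^sub>m n n :: 'a mat)"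
    using assms(2) by (metis index_matrix_unit index_zero_mat(1) le0 order_refl zero_neq_one)
  ultimately show ?thesis
    unfolding graded_monomial_identity_def by (metis As_def length_map length_upt minus_nat.diff_0)
qed

lemma exists_path_mod_Suc:
  fixes ds :: "int list"
  assumes "length ds < n"
  shows "\<exists>P. (\<forall>j\<le>length ds. P j < n) \<and>
    (\<forall>i<length ds. (int (P (Suc i)) - int (P i)) mod int (n + 1) = ds ! i mod int (n + 1))"
proof -
  define m where "m = int (n + 1)"
  define S where "S j = (\<Sum>i<j. ds ! i)" for j
  \<comment> \<open>s + S j hits the residue n, which is no index, exactly when s \<equiv> n - S j.\<close>
  define forbidden where "forbidden = (\<lambda>j. (int n - S j) mod m) ` {0..length ds}"
  have "card forbidden \<le> card {0..length ds}"
    unfolding forbidden_def by (rule card_image_le) simp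
  also have "\<dots> < card {0..int n}"
    using assms by simp
  finally have "\<not> {0..int n} \<subseteq> forbidden"
    using card_mono[of forbidden "{0..int n}"] by (auto simp: forbidden_def)
  then obtain s where s: "s \<in> {0..int n}" "s \<notin> forbidden"
    by blast
  define P where "P j = nat ((s + S j) mod m)" for j
  have P: "int (P j) = (s + S j) mod m" for j
    by (simp add: P_def m_def)
  have "P j < n" if "j \<le> length ds" for j
  proof -
    have "(s + S j) mod m \<noteq> int n"
    proof
      assume "(s + S j) mod m = int n"
      then have "(int n - S j) mod m = s mod m"
        by (metis add_diff_cancel_right' mod_diff_left_eq)
      with s that show False
        by (auto simp: forbidden_def m_def)
    qed
    moreover have "(s + S j) mod m < m"
      by (simp add: m_def)
    ultimately show ?thesis
      using P[of j] unfolding m_def by linarith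
  qed
  moreover have "(int (P (Suc i)) - int (P i)) mod m = ds ! i mod m" for i
    unfolding P by (simp add: mod_diff_eq S_def)
  ultimately show ?thesis
    unfolding m_def by blast
qed

lemma not_graded_monomial_identity_short:
  assumes "0 < length ds" "length ds < n"
  shows "\<not> graded_monomial_identity TYPE('a::field) (n + 1) int n ds"
proof -
  obtain P where "\<forall>j\<le>length ds. P j < n"
    and "\<forall>i<length ds. (int (P (Suc i)) - int (P i)) mod int (n + 1) = ds ! i mod int (n + 1)"
    using exists_path_mod_Suc[OF assms(2)] by blast
  with assms(1) show ?thesis
    by (intro not_graded_monomial_identity_if_path) auto
qed

theorem mainTheorem5:
  fixes n :: nat
  assumes "n \<ge> 2"
  shows "graded_monomial_identity TYPE('a::field_char_0) (n + 1) (\<lambda>i. int i) n (replicate n 1)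
       \<and> (\<forall>ds. 0 < length ds \<and> length ds < n \<longrightarrow>
             \<not> graded_monomial_identity TYPE('a) (n + 1) (\<lambda>i. int i) n ds)"
proof (intro conjI allI impI)
  show "graded_monomial_identity TYPE('a) (n + 1) (\<lambda>i. int i) n (replicate n 1)"
    by (rule graded_monomial_identity_replicate_one) simp
next
  fix ds :: "int list"
  assume "0 < length ds \<and> length ds < n"
  then show "\<not> graded_monomial_identity TYPE('a) (n + 1) (\<lambda>i. int i) n ds"
    by (intro not_graded_monomial_identity_short) simp_all
qed

end
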